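(* Let $H\in M_{M\times N}(\mathbb T)$ be a partial Hadamard matrix with rows $R_1,\ldots,R_M$ such that the projections $P_{ij}=\mathrm{Proj}(R_i/R_j)$ pairwise commute. Let $\mathcal A\subset M_N(\mathbb C)$ be the unital algebra generated by the $P_{ij}$, and write $\mathcal A=C(S)$ with $S\subset\widetilde S_M$, where each character $\chi$ of $\mathcal A$ corresponds to the partial permutation $\sigma$ with $\sigma(j)=i\iff\chi(P_{ij})=1$. Then the quantum semigroup $G$ associated to $H$ is the subsemigroup $\langle S\rangle\subset\widetilde S_M$ generated by $S$, i.e. the bialgebra image of $\pi_H$ is $C(\langle S\rangle)$, with $u_{ij}$ mapped to the function $\sigma\mapsto1$ if $\sigma(j)=i$ and $0$ otherwise.
   Context: A partial Hadamard matrix is $H\in M_{M\times N}(\mathbb T)$ with pairwise orthogonal rows; $R_i/R_j$ is entrywise division; $\mathrm{Proj}(\xi)$ is the orthogonal projection onto $\mathbb C\xi$. $\widetilde S_M$ is the semigroup of partial permutations (bijections $X\to Y$, $X,Y\subset\{1,\ldots,M\}$) with product $(\sigma\tau)(j)=\sigma(\tau(j))$ when defined. $\widetilde{\mathcal A}_s(M)$ is the unital $*$-algebra generated by the entries $u_{ij}$ of the universal $M\times M$ submagic matrix (entries are projections, pairwise orthogonal on rows and on columns), with comultiplication $\Delta(u_{ij})=\sum_k u_{ik}\otimes u_{kj}$; $\pi_H:\widetilde{\mathcal A}_s(M)\to M_N(\mathbb C)$ is given by $u_{ij}\mapsto P_{ij}$. The bialgebra image of $\pi_H$ (whose algebra is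 written $C(G)$) is the minimal factorization $\pi_H=\rho\circ q$ with $q$ a surjective comultiplication-preserving unital $*$-homomorphism onto a unital $*$-algebra with comultiplication, minimal in the sense that every other such factorization maps uniquely onto it compatibly with the quotient maps. $C(\langle S\rangle)$ carries the comultiplication $\Delta(f)(\sigma,\tau)=f(\sigma\tau)$. *)

theory Defs
  imports Complex_Main "Jordan_Normal_Form.Matrix"
begin

definition partial_hadamard :: "nat \<Rightarrow> nat \<Rightarrow> (nat \<Rightarrow> nat \<Rightarrow> complex) \<Rightarrow> bool" where
  "partial_hadamard M N H \<longleftrightarrow>
     (\<forall>i<M. \<forall>a<N. cmod (H i a) = 1) \<and>
     (\<forall>i<M. \<forall>k<M. i \<noteq> k \<longrightarrow> (\<Sum>a<N. H i a * cnj (H k a)) = 0)"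

definition Proj :: "nat \<Rightarrow> (nat \<Rightarrow> complex) \<Rightarrow> complex mat" where
  "Proj N xi = mat N N (\<lambda>(a, b). xi a * cnj (xi b) / (\<Sum>c<N. complex_of_real ((cmod (xi c))\<^sup>2)))"

definition Pmat :: "nat \<Rightarrow> (nat \<Rightarrow> nat \<Rightarrow> complex) \<Rightarrow> nat \<Rightarrow> nat \<Rightarrow> complex mat" where
  "Pmat N H i j = Proj N (\<lambda>a. H i a / H j a)"

inductive_set gen_alg :: "nat \<Rightarrow> complex mat set \<Rightarrow> complex mat set"
  for N :: nat and G :: "complex mat set" where
  one: "1\<^sub>m N \<in> gen_alg N G"
| gen: "x \<in> G \<Longrightarrow> x \<in> gen_alg N G"
| add: "x \<in> gen_alg N G \<Longrightarrow> y \<in> gen_alg N G \<Longrightarrow> x + y \<in> gen_alg N G"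
| smult: "x \<in> gen_alg N G \<Longrightarrow> c \<cdot>\<^sub>m x \<in> gen_alg N G"
| mult: "x \<in> gen_alg N G \<Longrightarrow> y \<in> gen_alg N G \<Longrightarrow> x * y \<in> gen_alg N G"

definition P_algebra :: "nat \<Rightarrow> nat \<Rightarrow> (nat \<Rightarrow> nat \<Rightarrow> complex) \<Rightarrow> complex mat set" where
  "P_algebra M N H = gen_alg N {Pmat N H i j | i j. i < M \<and> j < M}"

definition character :: "nat \<Rightarrow> complex mat set \<Rightarrow> (complex mat \<Rightarrow> complex) \<Rightarrow> bool" where
  "character N A \<chi> \<longleftrightarrow>
     \<chi> (1\<^sub>m N) = 1 \<and>
     (\<forall>x\<in>A. \<forall>y\<in>A. \<chi> (x + y) = \<chi> x + \<chi> y) \<and>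
     (\<forall>x\<in>A. \<forall>c. \<chi> (c \<cdot>\<^sub>m x) = c * \<chi> x) \<and>
     (\<forall>x\<in>A. \<forall>y\<in>A. \<chi> (x * y) = \<chi> x * \<chi> y)"

text \<open>Partial permutations of {0..<M} are modelled as partial maps nat \<rightharpoonup> nat with
  domain and range inside {..<M}; the product is composition (sigma tau)(j) = sigma(tau(j)).\<close>
definition char_pperms :: "nat \<Rightarrow> nat \<Rightarrow> (nat \<Rightarrow> nat \<Rightarrow> complex) \<Rightarrow> (nat \<Rightarrow> nat option) set" where
  "char_pperms M N H =
     {\<sigma>. dom \<sigma> \<subseteq> {..<M} \<and> ran \<sigma> \<subseteq> {..<M} \<and>
          (\<exists>\<chi>. character N (P_algebra M N H) \<chi> \<and>
               (\<forall>i<M. \<forall>j<M. \<sigma> j = Some i \<longleftrightarrow> \<chi> (Pmat N H i j) = 1))}"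

inductive_set gen_semigroup :: "(nat \<Rightarrow> nat option) set \<Rightarrow> (nat \<Rightarrow> nat option) set"
  for S where
  base: "\<sigma> \<in> S \<Longrightarrow> \<sigma> \<in> gen_semigroup S"
| comp: "\<sigma> \<in> gen_semigroup S \<Longrightarrow> \<tau> \<in> gen_semigroup S \<Longrightarrow> (\<sigma> \<circ>\<^sub>m \<tau>) \<in> gen_semigroup S"

text \<open>Elements of the free algebra on generators u_ij (i,j < M) are finitely supported
  coefficient functions on words; a word [(i1,j1),...,(in,jn)] stands for u_{i1 j1}...u_{in jn}.\<close>
type_synonym word = "(nat \<times> nat) list"
type_synonym felem = "word \<Rightarrow> complex"

definition free_alg :: "nat \<Rightarrow> felem set" where
  "free_alg M = {f. finite {w. f w \<noteq> 0} \<and> (\<forall>w. f w \<noteq> 0 \<longrightarrow> set w \<subseteq> {..<M} \<times> {..<M})}"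

definition fmul :: "felem \<Rightarrow> felem \<Rightarrow> felem" where
  "fmul f g = (\<lambda>w. \<Sum>k\<le>length w. f (take k w) * g (drop k w))"

definition fone :: felem where
  "fone = (\<lambda>w. if w = [] then 1 else 0)"

definition fgen :: "nat \<Rightarrow> nat \<Rightarrow> felem" where
  "fgen i j = (\<lambda>w. if w = [(i, j)] then 1 else 0)"

definition fadd :: "felem \<Rightarrow> felem \<Rightarrow> felem" where
  "fadd f g = (\<lambda>w. f w + g w)"

definition fscale :: "complex \<Rightarrow> felem \<Rightarrow> felem" where
  "fscale c f = (\<lambda>w. c * f w)"

text \<open>Involution: generators are self-adjoint (u_ij = u_ij^* since they are projections).\<close>
definition fstar :: "felem \<Rightarrow> felem" where
  "fstar f = (\<lambda>w. cnj (f (rev w)))"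

text \<open>Defining relations of the universal submagic matrix: u_ij^2 = u_ij (projections; self-adjointness
  is built into the involution), and orthogonality along rows and along columns.\<close>
definition submagic_rels :: "nat \<Rightarrow> felem set" where
  "submagic_rels M =
     {fadd (fmul (fgen i j) (fgen i j)) (fscale (-1) (fgen i j)) | i j. i < M \<and> j < M} \<union>
     {fmul (fgen i j) (fgen i k) | i j k. i < M \<and> j < M \<and> k < M \<and> j \<noteq> k} \<union>
     {fmul (fgen i j) (fgen k j) | i j k. i < M \<and> j < M \<and> k < M \<and> i \<noteq> k}"

text \<open>Elements of the algebraic tensor square are finitely supported functions on pairs of words.\<close>
type_synonym telem = "word \<times> word \<Rightarrow> complex"

definition ftensor :: "felem \<Rightarrow> felem \<Rightarrow> telem" where
  "ftensor f g = (\<lambda>(u, v). f u * g v)"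

text \<open>Comultiplication on words: Delta(u_{i1 j1}...u_{in jn}) =
  sum over k1..kn < M of u_{i1 k1}...u_{in kn} (x) u_{k1 j1}...u_{kn jn}.\<close>
definition fcomul :: "nat \<Rightarrow> felem \<Rightarrow> telem" where
  "fcomul M f = (\<lambda>(u, v).
     if length u = length v \<and> map snd u = map fst v \<and> (\<forall>x\<in>set u. snd x < M)
     then f (zip (map fst u) (map snd v)) else 0)"

inductive_set cspan :: "telem set \<Rightarrow> telem set" for X where
  zero: "(\<lambda>_. 0) \<in> cspan X"
| base: "x \<in> X \<Longrightarrow> x \<in> cspan X"
| add: "x \<in> cspan X \<Longrightarrow> y \<in> cspan X \<Longrightarrow> (\<lambda>p. x p + y p) \<in> cspan X"
| scale: "x \<in> cspan X \<Longrightarrow> (\<lambda>p. c * x p) \<in> cspan X"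

fun Pword :: "nat \<Rightarrow> (nat \<Rightarrow> nat \<Rightarrow> complex) \<Rightarrow> word \<Rightarrow> complex mat" where
  "Pword N H [] = 1\<^sub>m N"
| "Pword N H ((i, j) # w) = Pmat N H i j * Pword N H w"

text \<open>pi_H on the free algebra (u_ij \<mapsto> P_ij); it factors through the universal submagic algebra.\<close>
definition piH :: "nat \<Rightarrow> (nat \<Rightarrow> nat \<Rightarrow> complex) \<Rightarrow> felem \<Rightarrow> complex mat" where
  "piH N H f = mat N N (\<lambda>(a, b). \<Sum>w\<in>{w. f w \<noteq> 0}. f w * (Pword N H w $$ (a, b)))"

text \<open>A surjective comultiplication-preserving unital *-homomorphism q from the universal
  submagic algebra A = F/R (F free, R generated by the submagic relations) onto some unital
  *-algebra with comultiplication, through which pi_H factors, is determined up to isomorphism by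
  its kernel; lifted to F, this kernel is an ideal I with: R \<subseteq> I, I a two-sided *-ideal of F,
  I \<subseteq> ker pi_H, and Delta(I) \<subseteq> I(x)F + F(x)I (= kernel of F(x)F \<rightarrow> B(x)B), which is exactly the
  condition for the comultiplication of A to descend to B = F/I.  A factorization maps
  (uniquely) onto another one compatibly with the quotient maps iff its kernel is contained in
  the other's kernel.\<close>
definition factorization_ideal :: "nat \<Rightarrow> nat \<Rightarrow> (nat \<Rightarrow> nat \<Rightarrow> complex) \<Rightarrow> felem set \<Rightarrow> bool" where
  "factorization_ideal M N H I \<longleftrightarrow>
     I \<subseteq> free_alg M \<and>
     submagic_rels M \<subseteq> I \<and>
     (\<forall>f\<in>I. \<forall>g\<in>I. fadd f g \<in> I) \<and>
     (\<forall>f\<in>I. \<forall>c. fscale c f \<in> I) \<and>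
     (\<forall>f\<in>I. \<forall>g\<in>free_alg M. fmul f g \<in> I \<and> fmul g f \<in> I) \<and>
     (\<forall>f\<in>I. fstar f \<in> I) \<and>
     (\<forall>f\<in>I. piH N H f = 0\<^sub>m N N) \<and>
     (\<forall>f\<in>I. fcomul M f \<in>
        cspan ({ftensor a b | a b. a \<in> I \<and> b \<in> free_alg M} \<union>
               {ftensor a b | a b. a \<in> free_alg M \<and> b \<in> I}))"

definition ev_word :: "(nat \<Rightarrow> nat option) \<Rightarrow> word \<Rightarrow> complex" where
  "ev_word \<sigma> w = (if (\<forall>(i, j)\<in>set w. \<sigma> j = Some i) then 1 else 0)"

text \<open>The map q : F \<rightarrow> C(G) for a set G of partial permutations, u_ij \<mapsto> (sigma \<mapsto> [sigma(j)=i]);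
  functions in C(G) are represented as functions vanishing outside G.\<close>
definition qmap :: "(nat \<Rightarrow> nat option) set \<Rightarrow> felem \<Rightarrow> (nat \<Rightarrow> nat option) \<Rightarrow> complex" where
  "qmap G f = (\<lambda>\<sigma>. if \<sigma> \<in> G then (\<Sum>w\<in>{w. f w \<noteq> 0}. f w * ev_word \<sigma> w) else 0)"

definition qqmap :: "(nat \<Rightarrow> nat option) set \<Rightarrow> telem \<Rightarrow> (nat \<Rightarrow> nat option) \<Rightarrow> (nat \<Rightarrow> nat option) \<Rightarrow> complex" where
  "qqmap G t \<sigma> \<tau> = (if \<sigma> \<in> G \<and> \<tau> \<in> G
      then (\<Sum>p\<in>{p. t p \<noteq> 0}. t p * ev_word \<sigma> (fst p) * ev_word \<tau> (snd p)) else 0)"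

text \<open>(C(G), q) is the bialgebra image of pi_H: q is a unital *-homomorphism from the
  universal submagic algebra (it kills the relations), onto C(G), comultiplication-preserving for
  Delta(f)(sigma,tau) = f(sigma tau), pi_H factors through it, and it is minimal: the kernel of
  every other factorization is contained in its kernel.\<close>
definition is_bialgebra_image :: "nat \<Rightarrow> nat \<Rightarrow> (nat \<Rightarrow> nat \<Rightarrow> complex) \<Rightarrow> (nat \<Rightarrow> nat option) set \<Rightarrow> bool" where
  "is_bialgebra_image M N H G \<longleftrightarrow>
     (\<forall>\<sigma>\<in>G. \<forall>\<tau>\<in>G. (\<sigma> \<circ>\<^sub>m \<tau>) \<in> G) \<and>
     qmap G fone = (\<lambda>\<sigma>. if \<sigma> \<in> G then 1 else 0) \<and>
     (\<forall>f\<in>free_alg M. \<forall>g\<in>free_alg M. qmap G (fadd f g) = (\<lambda>\<sigma>. qmap G f \<sigma> + qmap G g \<sigma>)) \<and>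
     (\<forall>f\<in>free_alg M. \<forall>c. qmap G (fscale c f) = (\<lambda>\<sigma>. c * qmap G f \<sigma>)) \<and>
     (\<forall>f\<in>free_alg M. \<forall>g\<in>free_alg M. qmap G (fmul f g) = (\<lambda>\<sigma>. qmap G f \<sigma> * qmap G g \<sigma>)) \<and>
     (\<forall>f\<in>free_alg M. qmap G (fstar f) = (\<lambda>\<sigma>. cnj (qmap G f \<sigma>))) \<and>
     (\<forall>r\<in>submagic_rels M. qmap G r = (\<lambda>_. 0)) \<and>
     (\<forall>g. (\<forall>\<sigma>. \<sigma> \<notin> G \<longrightarrow> g \<sigma> = 0) \<longrightarrow> (\<exists>f\<in>free_alg M. qmap G f = g)) \<and>
     (\<forall>f\<in>free_alg M. \<forall>\<sigma>\<in>G. \<forall>\<tau>\<in>G. qqmap G (fcomul M f) \<sigma> \<tau> = qmap G f (\<sigma> \<circ>\<^sub>m \<tau>)) \<and>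
     (\<forall>f\<in>free_alg M. qmap G f = (\<lambda>_. 0) \<longrightarrow> piH N H f = 0\<^sub>m N N) \<and>
     (\<forall>I. factorization_ideal M N H I \<longrightarrow> (\<forall>f\<in>I. qmap G f = (\<lambda>_. 0)))"

end

theory Submission
  imports Defs
begin

text \<open>Evaluating the generators \<open>u\<^sub>i\<^sub>j\<close> at a partial permutation \<open>\<sigma>\<close> as \<open>[\<sigma>(j) = i]\<close> is a
  *-character of the free algebra which kills the submagic relations when \<open>\<sigma>\<close> is injective, and
  under which the comultiplication becomes composition: evaluating \<open>\<Delta>(f)\<close> at \<open>(\<sigma>, \<tau>)\<close> gives
  \<open>f(\<sigma>\<tau>)\<close>. Since the \<open>P\<^sub>i\<^sub>j\<close> are commuting projections, the algebra they generate is spanned by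
  its joint spectral projections, so its characters, i.e. the elements of \<open>S\<close>, separate points:
  \<open>\<pi>\<^sub>H(f) = 0\<close> iff \<open>f\<close> vanishes on \<open>S\<close>. Hence \<open>\<pi>\<^sub>H\<close> factors through evaluation on \<open>\<langle>S\<rangle>\<close>, and any
  factorization ideal vanishes on \<open>S\<close>, hence on \<open>\<langle>S\<rangle>\<close> by the compatibility with \<open>\<Delta>\<close>: this is
  minimality. Surjectivity onto functions on the finite set \<open>\<langle>S\<rangle>\<close> comes from polynomials
  singling out one injective partial permutation.\<close>

definition fin_supp :: "('a \<Rightarrow> complex) \<Rightarrow> bool" where
  "fin_supp f \<longleftrightarrow> finite {x. f x \<noteq> 0}"

text \<open>\<open>qmap\<close> and \<open>qqmap\<close> are linear extensions of evaluations at partial maps.\<close>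
definition lin_ext :: "('a \<Rightarrow> complex) \<Rightarrow> ('a \<Rightarrow> complex) \<Rightarrow> complex" where
  "lin_ext \<phi> f = (\<Sum>x\<in>{x. f x \<noteq> 0}. f x * \<phi> x)"

lemma lin_ext_superset:
  assumes "finite A" "{x. f x \<noteq> 0} \<subseteq> A"
  shows "lin_ext \<phi> f = (\<Sum>x\<in>A. f x * \<phi> x)"
  unfolding lin_ext_def using assms by (intro sum.mono_neutral_left) auto

lemma fin_supp_add: "fin_supp f \<Longrightarrow> fin_supp g \<Longrightarrow> fin_supp (\<lambda>x. f x + g x)"
  unfolding fin_supp_def by (rule finite_subset[of _ "{x. f x \<noteq> 0} \<union> {x. g x \<noteq> 0}"]) auto

lemma fin_supp_scale: "fin_supp f \<Longrightarrow> fin_supp (\<lambda>x. c * f x)"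
  unfolding fin_supp_def by (rule finite_subset[of _ "{x. f x \<noteq> 0}"]) auto

lemma lin_ext_add:
  assumes "fin_supp f" "fin_supp g"
  shows "lin_ext \<phi> (\<lambda>x. f x + g x) = lin_ext \<phi> f + lin_ext \<phi> g"
proof -
  let ?A = "{x. f x \<noteq> 0} \<union> {x. g x \<noteq> 0}"
  have "finite ?A" using assms by (auto simp: fin_supp_def)
  then show ?thesis
    by (subst (1 2 3) lin_ext_superset[where A = ?A]) (auto simp: distrib_right sum.distrib)
qed

lemma lin_ext_scale: "lin_ext \<phi> (\<lambda>x. c * f x) = c * lin_ext \<phi> f"
proof (cases "c = 0")
  case False
  then show ?thesis by (simp add: lin_ext_def sum_distrib_left mult.assoc)
qed (simp add: lin_ext_def)

lemma fin_supp_fscale: "fin_supp f \<Longrightarrow> fin_supp (fscale c f)"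
  unfolding fscale_def by (rule fin_supp_scale)

lemma lin_ext_fadd: "fin_supp f \<Longrightarrow> fin_supp g \<Longrightarrow> lin_ext \<phi> (fadd f g) = lin_ext \<phi> f + lin_ext \<phi> g"
  unfolding fadd_def by (rule lin_ext_add)

lemma lin_ext_fscale: "lin_ext \<phi> (fscale c f) = c * lin_ext \<phi> f"
  unfolding fscale_def by (rule lin_ext_scale)

lemma fin_supp_zero: "fin_supp (\<lambda>_. 0)"
  by (simp add: fin_supp_def)

lemma lin_ext_zero: "lin_ext \<phi> (\<lambda>_. 0) = 0"
  by (simp add: lin_ext_def)

lemma lin_ext_tensor:
  assumes "fin_supp a" "fin_supp b"
  shows "fin_supp (ftensor a b)"
    and "lin_ext (\<lambda>p. \<phi> (fst p) * \<psi> (snd p)) (ftensor a b) = lin_ext \<phi> a * lin_ext \<psi> b"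
proof -
  let ?A = "{x. a x \<noteq> 0} \<times> {x. b x \<noteq> 0}"
  have fin: "finite ?A" using assms by (simp add: fin_supp_def)
  have sub: "{p. ftensor a b p \<noteq> 0} \<subseteq> ?A" by (auto simp: ftensor_def)
  show "fin_supp (ftensor a b)" unfolding fin_supp_def using finite_subset[OF sub fin] .
  have "lin_ext (\<lambda>p. \<phi> (fst p) * \<psi> (snd p)) (ftensor a b)
      = (\<Sum>p\<in>?A. (a (fst p) * \<phi> (fst p)) * (b (snd p) * \<psi> (snd p)))"
    by (subst lin_ext_superset[OF fin sub]) (auto simp: ftensor_def intro: sum.cong)
  also have "\<dots> = lin_ext \<phi> a * lin_ext \<psi> b"
    unfolding lin_ext_def sum_product by (simp add: sum.cartesian_product case_prod_beta)
  finally show "lin_ext (\<lambda>p. \<phi> (fst p) * \<psi> (snd p)) (ftensor a b) = lin_ext \<phi> a * lin_ext \<psi> b" .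
qed

lemma lin_ext_cspan_eq_zero:
  assumes "t \<in> cspan X" and "\<And>x. x \<in> X \<Longrightarrow> fin_supp x \<and> lin_ext \<Phi> x = 0"
  shows "fin_supp t \<and> lin_ext \<Phi> t = 0"
  using assms(1)
proof (induction rule: cspan.induct)
  case zero
  then show ?case by (simp add: fin_supp_zero lin_ext_zero)
next
  case (base x)
  then show ?case using assms(2) by blast
next
  case (add x y)
  then show ?case by (simp add: fin_supp_add lin_ext_add)
next
  case (scale x c)
  then show ?case by (simp add: fin_supp_scale lin_ext_scale)
qed

lemma fmul_supp_subset:
  "{w. fmul f g w \<noteq> 0} \<subseteq> (\<lambda>(u, v). u @ v) ` ({u. f u \<noteq> 0} \<times> {v. g v \<noteq> 0})"
proof
  fix w assume "w \<in> {w. fmul f g w \<noteq> 0}"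
  then obtain k where "f (take k w) * g (drop k w) \<noteq> 0"
    unfolding fmul_def by (auto elim: sum.not_neutral_contains_not_neutral)
  then show "w \<in> (\<lambda>(u, v). u @ v) ` ({u. f u \<noteq> 0} \<times> {v. g v \<noteq> 0})"
    by (intro rev_image_eqI[of "(take k w, drop k w)"]) auto
qed

lemma fin_supp_fmul: "fin_supp f \<Longrightarrow> fin_supp g \<Longrightarrow> fin_supp (fmul f g)"
  unfolding fin_supp_def by (rule finite_subset[OF fmul_supp_subset]) simp

lemma lin_ext_fmul:
  assumes "fin_supp f" "fin_supp g" and hom: "\<And>u v. \<phi> (u @ v) = \<phi> u * \<phi> v"
  shows "lin_ext \<phi> (fmul f g) = lin_ext \<phi> f * lin_ext \<phi> g"
proof -
  let ?Sf = "{u. f u \<noteq> 0}" and ?Sg = "{v. g v \<noteq> 0}"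
  let ?A = "(\<lambda>(u, v). u @ v) ` (?Sf \<times> ?Sg)"
  let ?D = "Sigma ?A (\<lambda>w. {..length w})"
  let ?split = "\<lambda>(u, v). (u @ v, length u)"
  define h where "h = (\<lambda>(w::word, k). f (take k w) * g (drop k w) * \<phi> w)"
  have fin: "finite (?Sf \<times> ?Sg)" using assms by (simp add: fin_supp_def)
  have "lin_ext \<phi> (fmul f g) = (\<Sum>w\<in>?A. \<Sum>k\<le>length w. h (w, k))"
    using fin by (subst lin_ext_superset[OF _ fmul_supp_subset])
      (simp_all add: fmul_def h_def sum_distrib_right)
  also have "\<dots> = sum h ?D"
    using fin by (subst sum.Sigma) auto
  also have "\<dots> = sum h (?split ` (?Sf \<times> ?Sg))"
  proof (rule sum.mono_neutral_right)
    show "finite ?D" using fin by auto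
    show "?split ` (?Sf \<times> ?Sg) \<subseteq> ?D" by force
    show "\<forall>p\<in>?D - ?split ` (?Sf \<times> ?Sg). h p = 0"
    proof
      fix p assume p: "p \<in> ?D - ?split ` (?Sf \<times> ?Sg)"
      then obtain w k where wk: "p = (w, k)" "k \<le> length w" by auto
      have "p = ?split (take k w, drop k w)" using wk by simp
      then have "(take k w, drop k w) \<notin> ?Sf \<times> ?Sg" using p by blast
      then show "h p = 0" unfolding h_def wk by auto
    qed
  qed
  also have "\<dots> = (\<Sum>(u, v)\<in>?Sf \<times> ?Sg. (f u * \<phi> u) * (g v * \<phi> v))"
    by (subst sum.reindex) (auto simp: inj_on_def h_def hom intro!: sum.cong)
  also have "\<dots> = lin_ext \<phi> f * lin_ext \<phi> g"
    unfolding lin_ext_def sum_product by (simp add: sum.cartesian_product case_prod_beta)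
  finally show ?thesis .
qed

lemma lin_ext_fstar:
  assumes "\<And>w. \<phi> (rev w) = \<phi> w" "\<And>w. cnj (\<phi> w) = \<phi> w"
  shows "lin_ext \<phi> (fstar f) = cnj (lin_ext \<phi> f)"
proof -
  have "{w. fstar f w \<noteq> 0} = rev ` {w. f w \<noteq> 0}"
    by (auto simp: fstar_def intro: rev_image_eqI[of "rev _"])
  then have "lin_ext \<phi> (fstar f) = (\<Sum>w\<in>{w. f w \<noteq> 0}. fstar f (rev w) * \<phi> (rev w))"
    unfolding lin_ext_def by (simp add: sum.reindex)
  also have "\<dots> = cnj (lin_ext \<phi> f)"
    by (simp add: lin_ext_def fstar_def assms)
  finally show ?thesis .
qed

section \<open>The free algebra and evaluation at partial maps\<close>

lemma ev_word_Nil [simp]: "ev_word \<sigma> [] = 1"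
  by (simp add: ev_word_def)

lemma ev_word_Cons: "ev_word \<sigma> ((i, j) # w) = (if \<sigma> j = Some i then 1 else 0) * ev_word \<sigma> w"
  by (simp add: ev_word_def)

lemma ev_word_append: "ev_word \<sigma> (u @ v) = ev_word \<sigma> u * ev_word \<sigma> v"
  by (auto simp: ev_word_def)

lemma ev_word_rev: "ev_word \<sigma> (rev w) = ev_word \<sigma> w"
  by (simp add: ev_word_def)

lemma cnj_ev_word: "cnj (ev_word \<sigma> w) = ev_word \<sigma> w"
  by (simp add: ev_word_def)

lemma ev_word_single: "ev_word \<sigma> [(i, j)] = (if \<sigma> j = Some i then 1 else 0)"
  by (simp add: ev_word_def)

lemma fin_supp_free_alg: "f \<in> free_alg M \<Longrightarrow> fin_supp f"
  by (simp add: free_alg_def fin_supp_def)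

lemma fin_supp_fone: "fin_supp fone"
  by (simp add: fin_supp_def fone_def)

lemma fin_supp_fgen: "fin_supp (fgen i j)"
  by (simp add: fin_supp_def fgen_def)

lemma lin_ext_fone: "lin_ext \<phi> fone = \<phi> []"
  by (simp add: lin_ext_def fone_def)

lemma lin_ext_fgen: "lin_ext \<phi> (fgen i j) = \<phi> [(i, j)]"
  by (simp add: lin_ext_def fgen_def)

lemma fone_in_free_alg: "fone \<in> free_alg M"
  by (auto simp: free_alg_def fone_def)

lemma fgen_in_free_alg: "i < M \<Longrightarrow> j < M \<Longrightarrow> fgen i j \<in> free_alg M"
  by (auto simp: free_alg_def fgen_def)

lemma fadd_in_free_alg:
  assumes "f \<in> free_alg M" "g \<in> free_alg M"
  shows "fadd f g \<in> free_alg M"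
proof -
  have "fin_supp (fadd f g)"
    unfolding fadd_def using assms by (intro fin_supp_add fin_supp_free_alg)
  moreover have "fadd f g w \<noteq> 0 \<Longrightarrow> f w \<noteq> 0 \<or> g w \<noteq> 0" for w
    by (auto simp: fadd_def)
  ultimately show ?thesis using assms unfolding free_alg_def fin_supp_def by blast
qed

lemma fscale_in_free_alg: "f \<in> free_alg M \<Longrightarrow> fscale c f \<in> free_alg M"
  unfolding free_alg_def fscale_def using fin_supp_scale[of f c] by (auto simp: fin_supp_def)

lemma fmul_in_free_alg:
  assumes "f \<in> free_alg M" "g \<in> free_alg M"
  shows "fmul f g \<in> free_alg M"
proof -
  have "set w \<subseteq> {..<M} \<times> {..<M}" if "fmul f g w \<noteq> 0" for w
  proof -
    have "w \<in> (\<lambda>(u, v). u @ v) ` ({u. f u \<noteq> 0} \<times> {v. g v \<noteq> 0})"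
      using fmul_supp_subset that by blast
    then obtain u v where "w = u @ v" "f u \<noteq> 0" "g v \<noteq> 0" by auto
    then show ?thesis using assms unfolding free_alg_def by auto
  qed
  moreover have "fin_supp (fmul f g)"
    using assms by (intro fin_supp_fmul fin_supp_free_alg)
  ultimately show ?thesis unfolding free_alg_def fin_supp_def by blast
qed

lemma sum_in_free_alg:
  "finite B \<Longrightarrow> (\<And>x. x \<in> B \<Longrightarrow> h x \<in> free_alg M) \<Longrightarrow> (\<lambda>w. \<Sum>x\<in>B. h x w) \<in> free_alg M"
proof (induction B rule: finite_induct)
  case (insert x B)
  then have "fadd (h x) (\<lambda>w. \<Sum>x\<in>B. h x w) \<in> free_alg M" by (simp add: fadd_in_free_alg)
  with insert.hyps show ?case by (simp add: fadd_def)
qed (simp add: free_alg_def)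

lemma lin_ext_sum:
  "finite B \<Longrightarrow> (\<And>x. x \<in> B \<Longrightarrow> h x \<in> free_alg M) \<Longrightarrow>
    lin_ext \<phi> (\<lambda>w. \<Sum>x\<in>B. h x w) = (\<Sum>x\<in>B. lin_ext \<phi> (h x))"
proof (induction B rule: finite_induct)
  case (insert x B)
  have "fin_supp (h x)" "fin_supp (\<lambda>w. \<Sum>x\<in>B. h x w)"
    using insert sum_in_free_alg[of B h M] by (blast intro: fin_supp_free_alg)+
  with insert show ?case by (simp add: lin_ext_add)
qed (simp add: lin_ext_zero)

lemma qmap_eq_lin_ext: "qmap G f \<sigma> = (if \<sigma> \<in> G then lin_ext (ev_word \<sigma>) f else 0)"
  by (simp add: qmap_def lin_ext_def)

lemma qqmap_eq_lin_ext:
  "qqmap G t \<sigma> \<tau> =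
    (if \<sigma> \<in> G \<and> \<tau> \<in> G then lin_ext (\<lambda>p. ev_word \<sigma> (fst p) * ev_word \<tau> (snd p)) t else 0)"
  by (simp add: qqmap_def lin_ext_def mult.assoc)

lemma qmap_fone: "qmap G fone = (\<lambda>\<sigma>. if \<sigma> \<in> G then 1 else 0)"
  by (intro ext) (simp add: qmap_eq_lin_ext lin_ext_fone)

lemma qmap_fgen: "qmap G (fgen i j) = (\<lambda>\<sigma>. if \<sigma> \<in> G then (if \<sigma> j = Some i then 1 else 0) else 0)"
  by (intro ext) (simp add: qmap_eq_lin_ext lin_ext_fgen ev_word_single)

lemma qmap_fadd:
  "fin_supp f \<Longrightarrow> fin_supp g \<Longrightarrow> qmap G (fadd f g) = (\<lambda>\<sigma>. qmap G f \<sigma> + qmap G g \<sigma>)"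
  by (intro ext) (simp add: qmap_eq_lin_ext lin_ext_fadd)

lemma qmap_fscale: "qmap G (fscale c f) = (\<lambda>\<sigma>. c * qmap G f \<sigma>)"
  by (intro ext) (simp add: qmap_eq_lin_ext lin_ext_fscale)

lemma qmap_fmul:
  "fin_supp f \<Longrightarrow> fin_supp g \<Longrightarrow> qmap G (fmul f g) = (\<lambda>\<sigma>. qmap G f \<sigma> * qmap G g \<sigma>)"
  by (intro ext) (simp add: qmap_eq_lin_ext lin_ext_fmul ev_word_append)

lemma qmap_fstar: "qmap G (fstar f) = (\<lambda>\<sigma>. cnj (qmap G f \<sigma>))"
  by (intro ext) (simp add: qmap_eq_lin_ext lin_ext_fstar ev_word_rev cnj_ev_word)

section \<open>Comultiplication and composition of partial maps\<close>

definition comul_term :: "word \<Rightarrow> nat list \<Rightarrow> word \<times> word" where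
  "comul_term w ks = (zip (map fst w) ks, zip ks (map snd w))"

lemma fcomul_comul_term:
  assumes "length ks = length w" "set ks \<subseteq> {..<M}"
  shows "fcomul M f (comul_term w ks) = f w"
proof -
  have "\<forall>x\<in>set (zip (map fst w) ks). snd x < M"
    using assms(2) by (auto dest: set_zip_rightD)
  then show ?thesis
    using assms(1) by (simp add: fcomul_def comul_term_def zip_map_fst_snd)
qed

lemma inj_on_comul_term: "inj_on (case_prod comul_term) {(w, ks). length ks = length w}"
proof (rule inj_onI, clarsimp)
  fix w ks w' ks'
  assume len: "length ks = length w" "length ks' = length w'"
    and eq: "comul_term w ks = comul_term w' ks'"
  then have "map fst w = map fst w'" "ks = ks'" "map snd w = map snd w'"
    unfolding comul_term_def by (metis map_fst_zip map_snd_zip length_map prod.inject)+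
  then show "w = w' \<and> ks = ks'" by (metis zip_map_fst_snd)
qed

lemma fcomul_supp:
  "{p. fcomul M f p \<noteq> 0} =
    case_prod comul_term ` (SIGMA w:{w. f w \<noteq> 0}. {ks. set ks \<subseteq> {..<M} \<and> length ks = length w})"
proof (intro equalityI subsetI)
  fix p assume "p \<in> {p. fcomul M f p \<noteq> 0}"
  then obtain u v where p: "p = (u, v)" and c: "length u = length v" "map snd u = map fst v"
    "\<forall>x\<in>set u. snd x < M" "f (zip (map fst u) (map snd v)) \<noteq> 0"
    by (cases p) (auto simp: fcomul_def split: if_splits)
  have "set (map snd u) \<subseteq> {..<M}" using c(3) by auto
  define w where "w = zip (map fst u) (map snd v)"
  have "map fst w = map fst u" "map snd w = map snd v" using c(1) by (simp_all add: w_def)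
  then have "u = zip (map fst w) (map snd u)" "v = zip (map snd u) (map snd w)"
    by (simp add: zip_map_fst_snd, simp add: c(2) zip_map_fst_snd)
  then have eq: "p = comul_term w (map snd u)"
    unfolding p comul_term_def by simp
  have mem: "(w, map snd u) \<in> (SIGMA w:{w. f w \<noteq> 0}. {ks. set ks \<subseteq> {..<M} \<and> length ks = length w})"
    using c \<open>set (map snd u) \<subseteq> {..<M}\<close> by (simp add: w_def)
  show "p \<in> case_prod comul_term ` (SIGMA w:{w. f w \<noteq> 0}. {ks. set ks \<subseteq> {..<M} \<and> length ks = length w})"
    using rev_image_eqI[OF mem, of p "case_prod comul_term"] eq by simp
qed (auto simp: fcomul_comul_term)

text \<open>Summing over the intermediate indices performs the composition of partial maps; only the
  index \<open>\<tau>(j)\<close> contributes, which is why the range of \<open>\<tau>\<close> has to lie in \<open>{..<M}\<close>.\<close>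
lemma sum_ev_word_comul_term:
  assumes ran: "\<And>j k. \<tau> j = Some k \<Longrightarrow> k < M"
  shows "(\<Sum>ks\<in>{ks. set ks \<subseteq> {..<M} \<and> length ks = length w}.
            ev_word \<sigma> (fst (comul_term w ks)) * ev_word \<tau> (snd (comul_term w ks)))
         = ev_word (\<sigma> \<circ>\<^sub>m \<tau>) w"
proof (induction w)
  case Nil
  have "{ks. set ks \<subseteq> {..<M} \<and> length ks = length []} = {[]}" by auto
  then show ?case by (simp add: comul_term_def)
next
  case (Cons x w)
  obtain i j where x: "x = (i, j)" by (cases x)
  let ?Ks = "{ks. set ks \<subseteq> {..<M} \<and> length ks = length w}"
  let ?a = "\<lambda>k. (if \<sigma> k = Some i then 1 else 0) * (if \<tau> j = Some k then 1 else (0::complex))"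
  let ?b = "\<lambda>ks. ev_word \<sigma> (fst (comul_term w ks)) * ev_word \<tau> (snd (comul_term w ks))"
  have step: "(\<Sum>k<M. ?a k) = (if (\<sigma> \<circ>\<^sub>m \<tau>) j = Some i then 1 else 0)"
  proof (cases "\<tau> j")
    case (Some k)
    then have "k < M" using ran by blast
    then show ?thesis using Some by (simp add: if_distrib[of "\<lambda>c. _ * c"] sum.delta' cong: if_cong)
  qed simp
  have "(\<Sum>ks\<in>{ks. set ks \<subseteq> {..<M} \<and> length ks = length (x # w)}.
            ev_word \<sigma> (fst (comul_term (x # w) ks)) * ev_word \<tau> (snd (comul_term (x # w) ks)))
      = (\<Sum>(ks, k)\<in>?Ks \<times> {..<M}. ?a k * ?b ks)"
    unfolding length_Cons lists_length_Suc_eq sum.reindex[OF inj_split_Cons]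
    by (simp add: comul_term_def x ev_word_Cons case_prod_beta mult_ac)
  also have "\<dots> = (\<Sum>ks\<in>?Ks. ?b ks) * (\<Sum>k<M. ?a k)"
    unfolding sum_product sum.cartesian_product by (simp add: case_prod_beta mult.commute)
  finally show ?case by (simp add: Cons.IH step x ev_word_Cons)
qed

lemma lin_ext_fcomul:
  assumes "fin_supp f" and ran: "\<And>j k. \<tau> j = Some k \<Longrightarrow> k < M"
  shows "lin_ext (\<lambda>p. ev_word \<sigma> (fst p) * ev_word \<tau> (snd p)) (fcomul M f) = lin_ext (ev_word (\<sigma> \<circ>\<^sub>m \<tau>)) f"
proof -
  let ?Ks = "\<lambda>w. {ks. set ks \<subseteq> {..<M} \<and> length ks = length w}"
  let ?D = "SIGMA w:{w. f w \<noteq> 0}. ?Ks w"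
  let ?\<Phi> = "\<lambda>p. ev_word \<sigma> (fst p) * ev_word \<tau> (snd p)"
  have inj: "inj_on (case_prod comul_term) ?D"
    by (rule inj_on_subset[OF inj_on_comul_term]) auto
  have fin: "finite {w. f w \<noteq> 0}" using assms(1) by (simp add: fin_supp_def)
  have "lin_ext ?\<Phi> (fcomul M f) = (\<Sum>(w, ks)\<in>?D. f w * ?\<Phi> (comul_term w ks))"
    unfolding lin_ext_def fcomul_supp using inj
    by (subst sum.reindex) (auto simp: fcomul_comul_term intro!: sum.cong)
  also have "\<dots> = (\<Sum>w\<in>{w. f w \<noteq> 0}. \<Sum>ks\<in>?Ks w. f w * ?\<Phi> (comul_term w ks))"
    using fin by (subst sum.Sigma) (auto simp: finite_lists_length_eq)
  also have "\<dots> = (\<Sum>w\<in>{w. f w \<noteq> 0}. f w * ev_word (\<sigma> \<circ>\<^sub>m \<tau>) w)"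
    by (simp add: sum_distrib_left[symmetric] sum_ev_word_comul_term[OF ran])
  finally show ?thesis by (simp add: lin_ext_def)
qed

section \<open>Injective partial permutations\<close>

definition inj_pperm :: "nat \<Rightarrow> (nat \<Rightarrow> nat option) \<Rightarrow> bool" where
  "inj_pperm M \<sigma> \<longleftrightarrow> (\<forall>j i. \<sigma> j = Some i \<longrightarrow> j < M \<and> i < M) \<and>
     (\<forall>j k i. \<sigma> j = Some i \<and> \<sigma> k = Some i \<longrightarrow> j = k)"

lemma inj_pperm_map_comp: "inj_pperm M \<sigma> \<Longrightarrow> inj_pperm M \<tau> \<Longrightarrow> inj_pperm M (\<sigma> \<circ>\<^sub>m \<tau>)"
  unfolding inj_pperm_def map_comp_Some_iff by metis

lemma inj_pperm_gen_semigroup: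
  assumes "\<And>\<sigma>. \<sigma> \<in> S \<Longrightarrow> inj_pperm M \<sigma>" "\<sigma> \<in> gen_semigroup S"
  shows "inj_pperm M \<sigma>"
  using assms(2) by induction (use assms(1) inj_pperm_map_comp in auto)

lemma finite_inj_pperm: "finite {\<sigma>. inj_pperm M \<sigma>}"
proof (rule finite_subset)
  show "{\<sigma>. inj_pperm M \<sigma>} \<subseteq> (\<Union>A\<in>Pow {..<M}. {m. dom m = A \<and> ran m \<subseteq> {..<M}})"
  proof
    fix \<sigma> assume "\<sigma> \<in> {\<sigma>. inj_pperm M \<sigma>}"
    then have "dom \<sigma> \<subseteq> {..<M}" "ran \<sigma> \<subseteq> {..<M}"
      unfolding inj_pperm_def dom_def ran_def by blast+
    then show "\<sigma> \<in> (\<Union>A\<in>Pow {..<M}. {m. dom m = A \<and> ran m \<subseteq> {..<M}})" by blast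
  qed
  show "finite (\<Union>A\<in>Pow {..<M}. {m. dom m = A \<and> ran m \<subseteq> {..<M::nat}})"
    using finite_subset[of _ "{..<M}"] by (intro finite_UN_I finite_set_of_finite_maps) auto
qed

lemma lin_ext_submagic_rel:
  assumes "inj_pperm M \<sigma>" "r \<in> submagic_rels M"
  shows "lin_ext (ev_word \<sigma>) r = 0"
proof -
  have mul: "lin_ext (ev_word \<sigma>) (fmul (fgen a b) (fgen c d)) = ev_word \<sigma> [(a, b)] * ev_word \<sigma> [(c, d)]"
    for a b c d
    by (simp add: lin_ext_fmul fin_supp_fgen ev_word_append lin_ext_fgen)
  from assms(2) show ?thesis
    unfolding submagic_rels_def
  proof (elim UnE CollectE exE conjE)
    fix i j assume "r = fadd (fmul (fgen i j) (fgen i j)) (fscale (-1) (fgen i j))"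
    then show ?thesis
      by (simp add: lin_ext_fadd lin_ext_fscale fin_supp_fmul fin_supp_fscale fin_supp_fgen
          lin_ext_fgen mul ev_word_single)
  next
    fix i j k assume "r = fmul (fgen i j) (fgen i k)" "j \<noteq> k"
    then show ?thesis using assms(1) unfolding inj_pperm_def by (auto simp: mul ev_word_single)
  next
    fix i j k assume "r = fmul (fgen i j) (fgen k j)" "i \<noteq> k"
    then show ?thesis by (auto simp: mul ev_word_single)
  qed
qed

definition agreement_factor :: "(nat \<Rightarrow> nat option) \<Rightarrow> nat \<times> nat \<Rightarrow> felem" where
  "agreement_factor \<sigma>\<^sub>0 p =
     (if \<sigma>\<^sub>0 (snd p) = Some (fst p) then fgen (fst p) (snd p) else fadd fone (fscale (-1) (fgen (fst p) (snd p))))"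

definition agreement_poly :: "(nat \<Rightarrow> nat option) \<Rightarrow> (nat \<times> nat) list \<Rightarrow> felem" where
  "agreement_poly \<sigma>\<^sub>0 L = foldr (\<lambda>p. fmul (agreement_factor \<sigma>\<^sub>0 p)) L fone"

lemma agreement_factor_in_free_alg:
  "p \<in> {..<M} \<times> {..<M} \<Longrightarrow> agreement_factor \<sigma>\<^sub>0 p \<in> free_alg M"
  by (auto simp: agreement_factor_def fgen_in_free_alg fadd_in_free_alg fscale_in_free_alg fone_in_free_alg)

lemma lin_ext_agreement_factor:
  "lin_ext (ev_word \<sigma>) (agreement_factor \<sigma>\<^sub>0 p) =
    (if \<sigma>\<^sub>0 (snd p) = Some (fst p) \<longleftrightarrow> \<sigma> (snd p) = Some (fst p) then 1 else 0)"
  by (cases p) (simp add: agreement_factor_def lin_ext_fadd lin_ext_fscale fin_supp_fone fin_supp_fgen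
      fin_supp_fscale lin_ext_fone lin_ext_fgen ev_word_single)

lemma agreement_poly_in_free_alg:
  "set L \<subseteq> {..<M} \<times> {..<M} \<Longrightarrow> agreement_poly \<sigma>\<^sub>0 L \<in> free_alg M"
  by (induction L) (auto simp: agreement_poly_def fone_in_free_alg
      intro!: fmul_in_free_alg agreement_factor_in_free_alg)

lemma lin_ext_agreement_poly:
  "set L \<subseteq> {..<M} \<times> {..<M} \<Longrightarrow> lin_ext (ev_word \<sigma>) (agreement_poly \<sigma>\<^sub>0 L) =
    (if \<forall>(i, j)\<in>set L. \<sigma>\<^sub>0 j = Some i \<longleftrightarrow> \<sigma> j = Some i then 1 else 0)"
proof (induction L)
  case (Cons p L)
  have "fin_supp (agreement_factor \<sigma>\<^sub>0 p)" "fin_supp (agreement_poly \<sigma>\<^sub>0 L)"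
    using Cons.prems by (auto intro: fin_supp_free_alg agreement_factor_in_free_alg
        agreement_poly_in_free_alg)
  moreover have "agreement_poly \<sigma>\<^sub>0 (p # L) = fmul (agreement_factor \<sigma>\<^sub>0 p) (agreement_poly \<sigma>\<^sub>0 L)"
    by (simp add: agreement_poly_def)
  ultimately show ?case
    using Cons by (simp add: lin_ext_fmul ev_word_append lin_ext_agreement_factor split_def)
qed (simp add: agreement_poly_def lin_ext_fone)

lemma inj_pperm_eqI:
  assumes "inj_pperm M \<sigma>" "inj_pperm M \<sigma>\<^sub>0"
    and "\<forall>(i, j)\<in>{..<M} \<times> {..<M}. \<sigma>\<^sub>0 j = Some i \<longleftrightarrow> \<sigma> j = Some i"
  shows "\<sigma> = \<sigma>\<^sub>0"
proof
  fix j
  have "\<sigma>\<^sub>0 j = Some i \<longleftrightarrow> \<sigma> j = Some i" for i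
  proof (cases "i < M \<and> j < M")
    case False
    then show ?thesis using assms(1,2) unfolding inj_pperm_def by blast
  qed (use assms(3) in blast)
  then show "\<sigma> j = \<sigma>\<^sub>0 j" by (metis not_Some_eq)
qed

lemma qmap_onto:
  assumes fin: "finite G" and inj: "\<And>\<sigma>. \<sigma> \<in> G \<Longrightarrow> inj_pperm M \<sigma>"
    and g: "\<And>\<sigma>. \<sigma> \<notin> G \<Longrightarrow> g \<sigma> = 0"
  shows "\<exists>f\<in>free_alg M. qmap G f = g"
proof -
  define L where "L = List.product [0..<M] [0..<M]"
  have L: "set L = {..<M} \<times> {..<M}" by (auto simp: L_def)
  define h where "h = (\<lambda>\<sigma>\<^sub>0. fscale (g \<sigma>\<^sub>0) (agreement_poly \<sigma>\<^sub>0 L))"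
  have h: "h \<sigma>\<^sub>0 \<in> free_alg M" for \<sigma>\<^sub>0
    unfolding h_def using L by (simp add: fscale_in_free_alg agreement_poly_in_free_alg)
  define f where "f = (\<lambda>w. \<Sum>\<sigma>\<^sub>0\<in>G. h \<sigma>\<^sub>0 w)"
  have f: "f \<in> free_alg M" "lin_ext \<phi> f = (\<Sum>\<sigma>\<^sub>0\<in>G. lin_ext \<phi> (h \<sigma>\<^sub>0))" for \<phi>
    unfolding f_def using sum_in_free_alg[OF fin h] lin_ext_sum[OF fin h] .
  have "qmap G f \<sigma> = g \<sigma>" for \<sigma>
  proof (cases "\<sigma> \<in> G")
    case True
    have "lin_ext (ev_word \<sigma>) (h \<sigma>\<^sub>0) = (if \<sigma>\<^sub>0 = \<sigma> then g \<sigma>\<^sub>0 else 0)" if "\<sigma>\<^sub>0 \<in> G" for \<sigma>\<^sub>0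
      using lin_ext_agreement_poly[of L M \<sigma> \<sigma>\<^sub>0] inj_pperm_eqI[OF inj inj, OF True that] L
      by (auto simp: h_def lin_ext_fscale)
    then show ?thesis using True fin by (simp add: qmap_eq_lin_ext f(2) sum.delta' cong: sum.cong)
  qed (simp add: qmap_eq_lin_ext g)
  then show ?thesis using f(1) by blast
qed

text \<open>Vanishing on \<open>I\<close> passes from \<open>\<sigma>\<close> and \<open>\<tau>\<close> to \<open>\<sigma>\<tau>\<close> because evaluation at \<open>\<sigma>\<tau>\<close> is evaluation
  of \<open>\<Delta>\<close> at \<open>(\<sigma>, \<tau>)\<close> and \<open>\<Delta>(I) \<subseteq> I \<otimes> F + F \<otimes> I\<close>.\<close>
lemma lin_ext_vanishes_on_gen_semigroup:
  assumes I: "I \<subseteq> free_alg M"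
    and comul: "\<And>f. f \<in> I \<Longrightarrow> fcomul M f \<in>
       cspan ({ftensor a b | a b. a \<in> I \<and> b \<in> free_alg M} \<union> {ftensor a b | a b. a \<in> free_alg M \<and> b \<in> I})"
    and inj: "\<And>\<sigma>. \<sigma> \<in> S \<Longrightarrow> inj_pperm M \<sigma>"
    and gen: "\<And>\<sigma> f. \<sigma> \<in> S \<Longrightarrow> f \<in> I \<Longrightarrow> lin_ext (ev_word \<sigma>) f = 0"
    and "\<sigma> \<in> gen_semigroup S" "f \<in> I"
  shows "lin_ext (ev_word \<sigma>) f = 0"
  using assms(5,6)
proof (induction arbitrary: f rule: gen_semigroup.induct)
  case (base \<sigma>)
  then show ?case by (rule gen)
next
  case (comp \<sigma> \<tau>)
  have ran: "\<tau> j = Some k \<Longrightarrow> k < M" for j k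
    using inj_pperm_gen_semigroup[OF inj comp.hyps(2)] unfolding inj_pperm_def by blast
  let ?\<Phi> = "\<lambda>p. ev_word \<sigma> (fst p) * ev_word \<tau> (snd p)"
  have "fin_supp (fcomul M f) \<and> lin_ext ?\<Phi> (fcomul M f) = 0"
  proof (rule lin_ext_cspan_eq_zero[OF comul[OF comp.prems]])
    fix x assume "x \<in> {ftensor a b | a b. a \<in> I \<and> b \<in> free_alg M} \<union>
      {ftensor a b | a b. a \<in> free_alg M \<and> b \<in> I}"
    then obtain a b where x: "x = ftensor a b"
      and ab: "(a \<in> I \<and> b \<in> free_alg M) \<or> (a \<in> free_alg M \<and> b \<in> I)" by blast
    have "fin_supp a" "fin_supp b" using ab I by (auto intro: fin_supp_free_alg)
    then show "fin_supp x \<and> lin_ext ?\<Phi> x = 0"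
      using ab comp.IH unfolding x by (auto simp: lin_ext_tensor)
  qed
  then show ?case
    using comp.prems I lin_ext_fcomul[OF fin_supp_free_alg ran] by auto
qed

lemma cnj_unimodular: "cmod a = 1 \<Longrightarrow> cnj a = 1 / a"
  using complex_div_cnj[of 1 a] by simp

lemma cnj_div_unimodular: "cmod a = 1 \<Longrightarrow> cmod b = 1 \<Longrightarrow> cnj (a / b) = b / a"
  by (simp add: cnj_unimodular)

lemma Proj_carrier [simp]: "Proj N x \<in> carrier_mat N N"
  by (simp add: Proj_def)

lemma Proj_dim [simp]: "dim_row (Proj N x) = N" "dim_col (Proj N x) = N"
  by (simp_all add: Proj_def)

lemma Proj_unimodular_entry:
  assumes "\<And>c. c < N \<Longrightarrow> cmod (x c) = 1" "a < N" "b < N"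
  shows "Proj N x $$ (a, b) = x a * cnj (x b) / of_nat N"
  using assms by (simp add: Proj_def)

lemma Proj_mult_Proj_unimodular:
  assumes x: "\<And>c. c < N \<Longrightarrow> cmod (x c) = 1" and y: "\<And>c. c < N \<Longrightarrow> cmod (y c) = 1"
  shows "Proj N x * Proj N y =
    mat N N (\<lambda>(a, b). x a * cnj (y b) * (\<Sum>c<N. cnj (x c) * y c) / (of_nat N)\<^sup>2)"
proof (rule eq_matI)
  fix a b assume "a < dim_row (mat N N (\<lambda>(a, b). x a * cnj (y b) * (\<Sum>c<N. cnj (x c) * y c) / (of_nat N)\<^sup>2))"
    "b < dim_col (mat N N (\<lambda>(a, b). x a * cnj (y b) * (\<Sum>c<N. cnj (x c) * y c) / (of_nat N)\<^sup>2))"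
  then have ab: "a < N" "b < N" by simp_all
  have "(Proj N x * Proj N y) $$ (a, b) = (\<Sum>c<N. Proj N x $$ (a, c) * Proj N y $$ (c, b))"
    using ab by (simp add: scalar_prod_def atLeast0LessThan)
  also have "\<dots> = (\<Sum>c<N. x a * cnj (y b) / (of_nat N)\<^sup>2 * (cnj (x c) * y c))"
    using ab by (intro sum.cong) (simp_all add: Proj_unimodular_entry x y power2_eq_square)
  finally show "(Proj N x * Proj N y) $$ (a, b) =
    mat N N (\<lambda>(a, b). x a * cnj (y b) * (\<Sum>c<N. cnj (x c) * y c) / (of_nat N)\<^sup>2) $$ (a, b)"
    using ab by (simp add: sum_divide_distrib[symmetric] sum_distrib_left[symmetric])
qed simp_all

lemma Proj_idem_unimodular:
  assumes "\<And>c. c < N \<Longrightarrow> cmod (x c) = 1"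
  shows "Proj N x * Proj N x = Proj N x"
proof -
  have "(\<Sum>c<N. cnj (x c) * x c) = of_nat N"
    using assms by (simp add: mult.commute[of "cnj _"] complex_norm_square[symmetric])
  then show ?thesis
    using assms by (subst Proj_mult_Proj_unimodular) (auto simp: Proj_unimodular_entry power2_eq_square)
qed

lemma Proj_mult_orth_unimodular:
  assumes "\<And>c. c < N \<Longrightarrow> cmod (x c) = 1" "\<And>c. c < N \<Longrightarrow> cmod (y c) = 1"
    and "(\<Sum>c<N. cnj (x c) * y c) = 0"
  shows "Proj N x * Proj N y = 0\<^sub>m N N"
  using Proj_mult_Proj_unimodular[OF assms(1,2)] assms(3) by (auto intro: eq_matI)

lemma Pmat_carrier [simp]: "Pmat N H i j \<in> carrier_mat N N"
  by (simp add: Pmat_def)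

lemma cmod_row_quotient:
  "partial_hadamard M N H \<Longrightarrow> i < M \<Longrightarrow> j < M \<Longrightarrow> c < N \<Longrightarrow> cmod (H i c / H j c) = 1"
  by (simp add: partial_hadamard_def norm_divide)

lemma Pmat_idem:
  "partial_hadamard M N H \<Longrightarrow> i < M \<Longrightarrow> j < M \<Longrightarrow> Pmat N H i j * Pmat N H i j = Pmat N H i j"
  unfolding Pmat_def by (rule Proj_idem_unimodular) (rule cmod_row_quotient)

lemma Pmat_row_orth:
  assumes "partial_hadamard M N H" and "i < M" "j < M" "k < M" "j \<noteq> k"
  shows "Pmat N H i j * Pmat N H i k = 0\<^sub>m N N"
  unfolding Pmat_def
proof (rule Proj_mult_orth_unimodular)
  have "cnj (H i c / H j c) * (H i c / H k c) = H j c * cnj (H k c)" if "c < N" for c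
  proof -
    have "cmod (H i c) = 1" "cmod (H j c) = 1" "cmod (H k c) = 1"
      using that assms unfolding partial_hadamard_def by auto
    moreover from this have "H i c \<noteq> 0" by auto
    ultimately show ?thesis by (simp add: cnj_div_unimodular cnj_unimodular)
  qed
  then show "(\<Sum>c<N. cnj (H i c / H j c) * (H i c / H k c)) = 0"
    using assms unfolding partial_hadamard_def by simp
qed (use assms cmod_row_quotient in auto)

lemma Pmat_col_orth:
  assumes "partial_hadamard M N H" and "i < M" "j < M" "k < M" "i \<noteq> k"
  shows "Pmat N H i j * Pmat N H k j = 0\<^sub>m N N"
  unfolding Pmat_def
proof (rule Proj_mult_orth_unimodular)
  have "cnj (H i c / H j c) * (H k c / H j c) = H k c * cnj (H i c)" if "c < N" for c
  proof -
    have "cmod (H i c) = 1" "cmod (H j c) = 1" "cmod (H k c) = 1"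
      using that assms unfolding partial_hadamard_def by auto
    moreover from this have "H j c \<noteq> 0" by auto
    ultimately show ?thesis by (simp add: cnj_div_unimodular cnj_unimodular)
  qed
  then show "(\<Sum>c<N. cnj (H i c / H j c) * (H k c / H j c)) = 0"
    using assms unfolding partial_hadamard_def by simp
qed (use assms cmod_row_quotient in auto)

lemma character_zero:
  assumes "character N A \<chi>" "1\<^sub>m N \<in> A"
  shows "\<chi> (0\<^sub>m N N) = 0"
proof -
  have "0\<^sub>m N N = (0::complex) \<cdot>\<^sub>m 1\<^sub>m N" by (rule eq_matI) auto
  moreover have "\<chi> ((0::complex) \<cdot>\<^sub>m 1\<^sub>m N) = 0 * \<chi> (1\<^sub>m N)"
    using assms unfolding character_def by blast
  ultimately show ?thesis by simp
qed

lemma character_idem: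
  assumes "character N A \<chi>" "x \<in> A" "x * x = x"
  shows "\<chi> x = 0 \<or> \<chi> x = 1"
proof -
  have "\<chi> (x * x) = \<chi> x * \<chi> x" using assms(1,2) unfolding character_def by blast
  then have "\<chi> x * (\<chi> x - 1) = 0" using assms(3) by (simp add: algebra_simps)
  then show ?thesis by simp
qed

lemma character_orth:
  assumes "character N A \<chi>" "1\<^sub>m N \<in> A" "x \<in> A" "y \<in> A" "x * y = 0\<^sub>m N N" "\<chi> x = 1"
  shows "\<chi> y \<noteq> 1"
proof -
  have "\<chi> (x * y) = \<chi> x * \<chi> y" using assms(1,3,4) unfolding character_def by blast
  then show ?thesis using assms(5,6) character_zero[OF assms(1,2)] by simp
qed

lemma one_in_P_algebra: "1\<^sub>m N \<in> P_algebra M N H"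
  unfolding P_algebra_def by (rule gen_alg.one)

lemma Pmat_in_P_algebra: "i < M \<Longrightarrow> j < M \<Longrightarrow> Pmat N H i j \<in> P_algebra M N H"
  unfolding P_algebra_def by (rule gen_alg.gen) blast

lemma character_Pmat:
  assumes "partial_hadamard M N H" "character N (P_algebra M N H) \<chi>" "i < M" "j < M"
  shows "\<chi> (Pmat N H i j) = 0 \<or> \<chi> (Pmat N H i j) = 1"
  using character_idem[OF assms(2) Pmat_in_P_algebra[OF assms(3,4)] Pmat_idem[OF assms(1,3,4)]] .

lemma partial_map_of_rel:
  assumes "\<And>i k j. R i j \<Longrightarrow> R k j \<Longrightarrow> i = k"
  shows "\<exists>\<sigma>. \<forall>i j. \<sigma> j = Some i \<longleftrightarrow> R i j"
proof -
  have the: "(THE i. R i j) = i" if "R i j" for i j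
    using that assms by (intro the_equality) blast+
  show ?thesis
    by (rule exI[of _ "\<lambda>j. if \<exists>i. R i j then Some (THE i. R i j) else None"])
      (auto simp: the dest: assms)
qed

lemma char_pperm_of_character:
  assumes ph: "partial_hadamard M N H" and ch: "character N (P_algebra M N H) \<chi>"
  obtains \<sigma> where "\<sigma> \<in> char_pperms M N H" "\<forall>i<M. \<forall>j<M. \<sigma> j = Some i \<longleftrightarrow> \<chi> (Pmat N H i j) = 1"
proof -
  let ?R = "\<lambda>i j. i < M \<and> j < M \<and> \<chi> (Pmat N H i j) = 1"
  have "i = k" if "?R i j" "?R k j" for i j k
  proof (rule ccontr)
    assume "i \<noteq> k"
    then have "Pmat N H i j * Pmat N H k j = 0\<^sub>m N N" using that by (intro Pmat_col_orth[OF ph]) auto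
    then show False
      using that character_orth[OF ch one_in_P_algebra Pmat_in_P_algebra Pmat_in_P_algebra] by blast
  qed
  then obtain \<sigma> where \<sigma>: "\<forall>i j. \<sigma> j = Some i \<longleftrightarrow> ?R i j"
    using partial_map_of_rel[of ?R] by blast
  then have "dom \<sigma> \<subseteq> {..<M}" "ran \<sigma> \<subseteq> {..<M}"
    unfolding dom_def ran_def by auto
  with \<sigma> ch have "\<sigma> \<in> char_pperms M N H"
    unfolding char_pperms_def by blast
  with \<sigma> show ?thesis by (intro that) auto
qed

lemma inj_pperm_char_pperms:
  assumes ph: "partial_hadamard M N H" and "\<sigma> \<in> char_pperms M N H"
  shows "inj_pperm M \<sigma>"
proof -
  obtain \<chi> where ch: "character N (P_algebra M N H) \<chi>"
    and \<sigma>: "\<forall>i<M. \<forall>j<M. \<sigma> j = Some i \<longleftrightarrow> \<chi> (Pmat N H i j) = 1"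
    and dr: "dom \<sigma> \<subseteq> {..<M}" "ran \<sigma> \<subseteq> {..<M}"
    using assms(2) unfolding char_pperms_def by blast
  have bounds: "\<sigma> j = Some i \<Longrightarrow> j < M \<and> i < M" for i j
    using dr unfolding dom_def ran_def by blast
  moreover have "j = k" if "\<sigma> j = Some i" "\<sigma> k = Some i" for i j k
  proof (rule ccontr)
    assume "j \<noteq> k"
    moreover have "i < M" "j < M" "k < M" using bounds that by blast+
    ultimately have "Pmat N H i j * Pmat N H i k = 0\<^sub>m N N" by (intro Pmat_row_orth[OF ph])
    moreover have "\<chi> (Pmat N H i j) = 1" "\<chi> (Pmat N H i k) = 1"
      using \<sigma> that \<open>i < M\<close> \<open>j < M\<close> \<open>k < M\<close> by blast+
    ultimately show False
      using character_orth[OF ch one_in_P_algebra Pmat_in_P_algebra Pmat_in_P_algebra]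
        \<open>i < M\<close> \<open>j < M\<close> \<open>k < M\<close> by blast
  qed
  ultimately show ?thesis unfolding inj_pperm_def by blast
qed

lemma Pword_carrier [simp]: "Pword N H w \<in> carrier_mat N N"
  by (induction w) (auto intro: mult_carrier_mat[OF Pmat_carrier])

lemma Pword_in_P_algebra: "set w \<subseteq> {..<M} \<times> {..<M} \<Longrightarrow> Pword N H w \<in> P_algebra M N H"
proof (induction w)
  case (Cons x w)
  then show ?case
    using Pmat_in_P_algebra[of "fst x" M "snd x" N H] unfolding P_algebra_def
    by (cases x) (auto intro: gen_alg.mult)
qed (simp add: one_in_P_algebra)

lemma character_Pword:
  assumes ph: "partial_hadamard M N H" and ch: "character N (P_algebra M N H) \<chi>"
    and \<sigma>: "\<forall>i<M. \<forall>j<M. \<sigma> j = Some i \<longleftrightarrow> \<chi> (Pmat N H i j) = 1"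
  shows "set w \<subseteq> {..<M} \<times> {..<M} \<Longrightarrow> \<chi> (Pword N H w) = ev_word \<sigma> w"
proof (induction w)
  case Nil
  then show ?case using ch by (simp add: character_def)
next
  case (Cons x w)
  obtain i j where x: "x = (i, j)" by (cases x)
  have ij: "i < M" "j < M" and w: "set w \<subseteq> {..<M} \<times> {..<M}" using Cons.prems x by auto
  have "\<chi> (Pmat N H i j) = (if \<sigma> j = Some i then 1 else 0)"
    using character_Pmat[OF ph ch ij] \<sigma> ij by auto
  moreover have "\<chi> (Pmat N H i j * Pword N H w) = \<chi> (Pmat N H i j) * \<chi> (Pword N H w)"
    using ch Pmat_in_P_algebra[OF ij] Pword_in_P_algebra[OF w] unfolding character_def by blast
  ultimately show ?case using Cons.IH w x by (simp add: ev_word_Cons)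
qed

lemma word_comb_empty: "mat N N (\<lambda>p. \<Sum>w\<in>{}. f w * Pword N H w $$ p) = (0::complex) \<cdot>\<^sub>m 1\<^sub>m N"
  by (rule eq_matI) auto

lemma word_comb_insert:
  "finite B \<Longrightarrow> v \<notin> B \<Longrightarrow> mat N N (\<lambda>p. \<Sum>w\<in>insert v B. f w * Pword N H w $$ p) =
    f v \<cdot>\<^sub>m Pword N H v + mat N N (\<lambda>p. \<Sum>w\<in>B. f w * Pword N H w $$ p)"
  by (intro eq_matI) (auto simp: Pword_carrier[THEN carrier_matD(1)] Pword_carrier[THEN carrier_matD(2)])

lemma word_comb_in_P_algebra:
  "finite B \<Longrightarrow> (\<forall>w\<in>B. set w \<subseteq> {..<M} \<times> {..<M}) \<Longrightarrow>
    mat N N (\<lambda>p. \<Sum>w\<in>B. f w * Pword N H w $$ p) \<in> P_algebra M N H"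
proof (induction B rule: finite_induct)
  case empty
  show ?case unfolding word_comb_empty P_algebra_def by (intro gen_alg.smult gen_alg.one)
next
  case (insert v B)
  then have "Pword N H v \<in> P_algebra M N H" "mat N N (\<lambda>p. \<Sum>w\<in>B. f w * Pword N H w $$ p) \<in> P_algebra M N H"
    by (auto intro: Pword_in_P_algebra)
  then show ?case
    unfolding word_comb_insert[OF insert.hyps] P_algebra_def by (intro gen_alg.add gen_alg.smult)
qed

lemma character_word_comb:
  assumes ch: "character N (P_algebra M N H) \<chi>"
  shows "finite B \<Longrightarrow> (\<forall>w\<in>B. set w \<subseteq> {..<M} \<times> {..<M}) \<Longrightarrow>
    \<chi> (mat N N (\<lambda>p. \<Sum>w\<in>B. f w * Pword N H w $$ p)) = (\<Sum>w\<in>B. f w * \<chi> (Pword N H w))"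
proof (induction B rule: finite_induct)
  case empty
  show ?case using ch one_in_P_algebra unfolding word_comb_empty character_def by simp
next
  case (insert v B)
  let ?S = "mat N N (\<lambda>p. \<Sum>w\<in>B. f w * Pword N H w $$ p)"
  have v: "Pword N H v \<in> P_algebra M N H" and S: "?S \<in> P_algebra M N H"
    using insert by (auto intro: Pword_in_P_algebra word_comb_in_P_algebra)
  have "f v \<cdot>\<^sub>m Pword N H v \<in> P_algebra M N H"
    using v unfolding P_algebra_def by (rule gen_alg.smult)
  with v S insert ch show ?case
    unfolding word_comb_insert[OF insert.hyps] character_def by simp
qed

lemma piH_eq_word_comb:
  "piH N H f = mat N N (\<lambda>p. \<Sum>w\<in>{w. f w \<noteq> 0}. f w * Pword N H w $$ p)"
  unfolding piH_def by (rule eq_matI) auto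

lemma piH_in_P_algebra: "f \<in> free_alg M \<Longrightarrow> piH N H f \<in> P_algebra M N H"
  unfolding piH_eq_word_comb free_alg_def by (auto intro: word_comb_in_P_algebra)

lemma character_piH:
  assumes ph: "partial_hadamard M N H" and ch: "character N (P_algebra M N H) \<chi>"
    and \<sigma>: "\<forall>i<M. \<forall>j<M. \<sigma> j = Some i \<longleftrightarrow> \<chi> (Pmat N H i j) = 1"
    and f: "f \<in> free_alg M"
  shows "\<chi> (piH N H f) = lin_ext (ev_word \<sigma>) f"
proof -
  have supp: "finite {w. f w \<noteq> 0}" "\<forall>w\<in>{w. f w \<noteq> 0}. set w \<subseteq> {..<M} \<times> {..<M}"
    using f unfolding free_alg_def by auto
  then show ?thesis
    using character_word_comb[OF ch supp, of f] character_Pword[OF ph ch \<sigma>]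
    unfolding piH_eq_word_comb by (simp add: lin_ext_def)
qed

section \<open>Joint spectral projections\<close>

text \<open>For commuting projections \<open>P p\<close> these are the joint spectral projections: they add up to the
  identity and the algebra generated by the \<open>P p\<close> acts on each of them by scalars.\<close>
fun joint_proj :: "nat \<Rightarrow> ('p \<Rightarrow> complex mat) \<Rightarrow> ('p \<Rightarrow> bool) \<Rightarrow> 'p list \<Rightarrow> complex mat" where
  "joint_proj N P \<epsilon> [] = 1\<^sub>m N"
| "joint_proj N P \<epsilon> (p # L) = (if \<epsilon> p then P p else 1\<^sub>m N - P p) * joint_proj N P \<epsilon> L"

lemma joint_proj_carrier:
  "(\<And>p. p \<in> set L \<Longrightarrow> P p \<in> carrier_mat N N) \<Longrightarrow> joint_proj N P \<epsilon> L \<in> carrier_mat N N"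
  by (induction L) (auto intro!: mult_carrier_mat minus_carrier_mat)

lemma joint_proj_fun_upd: "p \<notin> set L \<Longrightarrow> joint_proj N P (\<epsilon>(p := b)) L = joint_proj N P \<epsilon> L"
  by (induction L) auto

lemma eq_zero_if_mult_joint_proj_eq_zero:
  assumes "distinct L" "\<And>p. p \<in> set L \<Longrightarrow> P p \<in> carrier_mat N N" "X \<in> carrier_mat N N"
    "\<And>\<epsilon>. X * joint_proj N P \<epsilon> L = 0\<^sub>m N N"
  shows "X = 0\<^sub>m N N"
  using assms
proof (induction L arbitrary: X)
  case Nil
  then show ?case by simp
next
  case (Cons p L)
  let ?Q = "P p"
  have pL: "p \<notin> set L" "distinct L" and Q: "?Q \<in> carrier_mat N N"
    and L: "\<And>q. q \<in> set L \<Longrightarrow> P q \<in> carrier_mat N N" using Cons.prems by auto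
  have jp: "joint_proj N P \<epsilon> L \<in> carrier_mat N N" for \<epsilon> using L by (rule joint_proj_carrier)
  have Q': "1\<^sub>m N - ?Q \<in> carrier_mat N N" using Q by (rule minus_carrier_mat)
  have "X * ?Q = 0\<^sub>m N N"
  proof (rule Cons.IH[OF pL(2) L])
    fix \<epsilon>
    have "X * (?Q * joint_proj N P \<epsilon> L) = 0\<^sub>m N N"
      using Cons.prems(4)[of "\<epsilon>(p := True)"] unfolding joint_proj.simps joint_proj_fun_upd[OF pL(1)]
      by simp
    then show "X * ?Q * joint_proj N P \<epsilon> L = 0\<^sub>m N N"
      using Cons.prems(3) Q jp by (simp add: assoc_mult_mat[of _ N N _ N _ N])
  qed (use Cons.prems(3) Q in auto)
  moreover have "X * (1\<^sub>m N - ?Q) = 0\<^sub>m N N"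
  proof (rule Cons.IH[OF pL(2) L])
    fix \<epsilon>
    have "X * ((1\<^sub>m N - ?Q) * joint_proj N P \<epsilon> L) = 0\<^sub>m N N"
      using Cons.prems(4)[of "\<epsilon>(p := False)"] unfolding joint_proj.simps joint_proj_fun_upd[OF pL(1)]
      by simp
    then show "X * (1\<^sub>m N - ?Q) * joint_proj N P \<epsilon> L = 0\<^sub>m N N"
      using Cons.prems(3) Q' jp by (simp add: assoc_mult_mat[of _ N N _ N _ N])
  qed (use Cons.prems(3) Q in auto)
  moreover have "X * (1\<^sub>m N - ?Q) = X - X * ?Q"
    using Cons.prems(3) Q by (simp add: mult_minus_distrib_mat[of _ N N _ N])
  moreover have "X - 0\<^sub>m N N = X" using Cons.prems(3) by (intro eq_matI) auto
  ultimately show ?case by simp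
qed

lemma mult_joint_proj:
  assumes "\<And>p. p \<in> set L \<Longrightarrow> P p \<in> carrier_mat N N"
    and idem: "P q * P q = P q" and "\<And>p. p \<in> set L \<Longrightarrow> P q * P p = P p * P q"
    and "q \<in> set L"
  shows "P q * joint_proj N P \<epsilon> L = (if \<epsilon> q then joint_proj N P \<epsilon> L else 0\<^sub>m N N)"
  using assms(1,3,4)
proof (induction L)
  case (Cons p L)
  let ?F = "if \<epsilon> p then P p else 1\<^sub>m N - P p"
  have Pq: "P q \<in> carrier_mat N N" and Pp: "P p \<in> carrier_mat N N" and F: "?F \<in> carrier_mat N N"
    and J: "joint_proj N P \<epsilon> L \<in> carrier_mat N N"
    using Cons.prems by (auto intro!: joint_proj_carrier minus_carrier_mat)
  have split: "P q * joint_proj N P \<epsilon> (p # L) = (P q * ?F) * joint_proj N P \<epsilon> L"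
    using Pq F J by (simp add: assoc_mult_mat[of _ N N _ N _ N])
  show ?case
  proof (cases "q = p")
    case True
    have "P q * ?F = (if \<epsilon> q then ?F else 0\<^sub>m N N)"
      using True idem Pq by (auto simp: mult_minus_distrib_mat[of _ N N _ N])
    then show ?thesis using split J by simp
  next
    case False
    then have IH: "P q * joint_proj N P \<epsilon> L = (if \<epsilon> q then joint_proj N P \<epsilon> L else 0\<^sub>m N N)"
      using Cons by simp
    have "P q * ?F = ?F * P q"
      using Cons.prems(2)[of p] Pq Pp
      by (auto simp: mult_minus_distrib_mat[of _ N N _ N] minus_mult_distrib_mat[of _ N N _ _ N])
    then have "P q * joint_proj N P \<epsilon> (p # L) = ?F * (P q * joint_proj N P \<epsilon> L)"
      using split Pq F J by (simp add: assoc_mult_mat[of _ N N _ N _ N])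
    then show ?thesis using IH F by simp
  qed
qed simp

lemma gen_alg_acts_by_scalar_on_joint_proj:
  assumes carrier: "\<And>p. p \<in> set L \<Longrightarrow> P p \<in> carrier_mat N N"
    and idem: "\<And>p. p \<in> set L \<Longrightarrow> P p * P p = P p"
    and comm: "\<And>p q. p \<in> set L \<Longrightarrow> q \<in> set L \<Longrightarrow> P q * P p = P p * P q"
    and "x \<in> gen_alg N (P ` set L)"
  shows "x \<in> carrier_mat N N \<and> (\<exists>c. x * joint_proj N P \<epsilon> L = c \<cdot>\<^sub>m joint_proj N P \<epsilon> L)"
  using assms(4)
proof (induction rule: gen_alg.induct)
  let ?E = "joint_proj N P \<epsilon> L"
  have E: "?E \<in> carrier_mat N N" using carrier by (rule joint_proj_carrier)
  {
    case one
    show ?case using E by (intro conjI exI[of _ 1]) (auto intro: eq_matI)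
  next
    case (gen x)
    then obtain q where q: "q \<in> set L" "x = P q" by blast
    then have "x * ?E = (if \<epsilon> q then ?E else 0\<^sub>m N N)"
      using mult_joint_proj[of L P N q \<epsilon>] carrier idem[OF q(1)] comm[OF _ q(1)] q by blast
    then have "x * ?E = (if \<epsilon> q then 1 else 0) \<cdot>\<^sub>m ?E"
      using E by (auto intro: eq_matI)
    then show ?case using carrier q by blast
  next
    case (add x y)
    then obtain a b where "x * ?E = a \<cdot>\<^sub>m ?E" "y * ?E = b \<cdot>\<^sub>m ?E" by blast
    moreover have "(x + y) * ?E = x * ?E + y * ?E"
      using add E by (intro add_mult_distrib_mat) auto
    ultimately have "(x + y) * ?E = (a + b) \<cdot>\<^sub>m ?E" by (auto intro: eq_matI simp: distrib_right)
    then show ?case using add by auto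
  next
    case (smult x c)
    then obtain a where "x * ?E = a \<cdot>\<^sub>m ?E" by blast
    moreover have "(c \<cdot>\<^sub>m x) * ?E = c \<cdot>\<^sub>m (x * ?E)"
      using smult E by (intro mult_smult_assoc_mat) auto
    ultimately have "(c \<cdot>\<^sub>m x) * ?E = (c * a) \<cdot>\<^sub>m ?E" by (auto intro: eq_matI)
    then show ?case using smult by auto
  next
    case (mult x y)
    then obtain a b where "x * ?E = a \<cdot>\<^sub>m ?E" "y * ?E = b \<cdot>\<^sub>m ?E" by blast
    moreover have "(x * y) * ?E = x * (y * ?E)" using mult E by (intro assoc_mult_mat) auto
    moreover have "x * (b \<cdot>\<^sub>m ?E) = b \<cdot>\<^sub>m (x * ?E)" using mult E by (intro mult_smult_distrib) auto
    ultimately have "(x * y) * ?E = (b * a) \<cdot>\<^sub>m ?E" by (auto intro: eq_matI)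
    then show ?case using mult by auto
  }
qed

lemma character_of_eigenmatrix:
  assumes E: "E \<in> carrier_mat N N" "E \<noteq> 0\<^sub>m N N"
    and A: "\<And>x. x \<in> A \<Longrightarrow> x \<in> carrier_mat N N \<and> (\<exists>c. x * E = c \<cdot>\<^sub>m E)"
  shows "\<exists>\<chi>. character N A \<chi> \<and> (\<forall>x\<in>A. x * E = \<chi> x \<cdot>\<^sub>m E)"
proof -
  have "\<not> (\<forall>a<N. \<forall>b<N. E $$ (a, b) = 0)"
  proof
    assume "\<forall>a<N. \<forall>b<N. E $$ (a, b) = 0"
    then have "E = 0\<^sub>m N N" using E(1) by (intro eq_matI) auto
    then show False using E(2) by simp
  qed
  then obtain a b where ab: "a < N" "b < N" "E $$ (a, b) \<noteq> 0" by blast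
  define \<chi> where "\<chi> x = (x * E) $$ (a, b) / E $$ (a, b)" for x
  have \<chi>: "\<chi> x = c" if "x * E = c \<cdot>\<^sub>m E" for x c
    using that ab E(1) unfolding \<chi>_def by simp
  have ev: "x * E = \<chi> x \<cdot>\<^sub>m E" if "x \<in> A" for x
    using A[OF that] \<chi> by blast
  have "character N A \<chi>"
    unfolding character_def
  proof (intro conjI ballI allI)
    show "\<chi> (1\<^sub>m N) = 1" using E(1) by (intro \<chi>) (auto intro: eq_matI)
  next
    fix x y assume xy: "x \<in> A" "y \<in> A"
    then have xy_carrier: "x \<in> carrier_mat N N" "y \<in> carrier_mat N N" using A by auto
    have "(x + y) * E = x * E + y * E" using xy_carrier E(1) by (rule add_mult_distrib_mat)
    then have "(x + y) * E = (\<chi> x + \<chi> y) \<cdot>\<^sub>m E"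
      unfolding ev[OF xy(1)] ev[OF xy(2)] by (auto intro: eq_matI simp: distrib_right)
    then show "\<chi> (x + y) = \<chi> x + \<chi> y" by (rule \<chi>)
    have "(x * y) * E = x * (y * E)" using xy_carrier E(1) by (rule assoc_mult_mat)
    also have "\<dots> = \<chi> y \<cdot>\<^sub>m (x * E)" unfolding ev[OF xy(2)] using xy_carrier(1) E(1) by (rule mult_smult_distrib)
    finally have "(x * y) * E = (\<chi> x * \<chi> y) \<cdot>\<^sub>m E" unfolding ev[OF xy(1)] by (auto intro: eq_matI)
    then show "\<chi> (x * y) = \<chi> x * \<chi> y" by (rule \<chi>)
  next
    fix x c assume x: "x \<in> A"
    have "(c \<cdot>\<^sub>m x) * E = c \<cdot>\<^sub>m (x * E)" using A[OF x] E(1) by (intro mult_smult_assoc_mat) auto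
    then have "(c \<cdot>\<^sub>m x) * E = (c * \<chi> x) \<cdot>\<^sub>m E" unfolding ev[OF x] by (auto intro: eq_matI)
    then show "\<chi> (c \<cdot>\<^sub>m x) = c * \<chi> x" by (rule \<chi>)
  qed
  then show ?thesis using ev by blast
qed

lemma P_algebra_gen_alg_product:
  "P_algebra M N H = gen_alg N ((\<lambda>(i, j). Pmat N H i j) ` set (List.product [0..<M] [0..<M]))"
  unfolding P_algebra_def by (rule arg_cong[where f = "gen_alg N"]) fastforce

text \<open>Characters separate the points of the commutative algebra generated by the \<open>P\<^sub>i\<^sub>j\<close>: each
  nonzero joint spectral projection \<open>E\<close> yields a character \<open>\<chi>\<close>, and \<open>\<pi>\<^sub>H(f) E = \<chi>(\<pi>\<^sub>H(f)) E = 0\<close>.\<close>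
lemma piH_eq_zero_if_vanishes_on_char_pperms:
  assumes ph: "partial_hadamard M N H"
    and comm: "\<forall>i<M. \<forall>j<M. \<forall>k<M. \<forall>l<M. Pmat N H i j * Pmat N H k l = Pmat N H k l * Pmat N H i j"
    and f: "f \<in> free_alg M"
    and vanish: "\<forall>\<sigma>\<in>char_pperms M N H. lin_ext (ev_word \<sigma>) f = 0"
  shows "piH N H f = 0\<^sub>m N N"
proof -
  define L where "L = List.product [0..<M] [0..<M]"
  define P where "P = (\<lambda>(i, j). Pmat N H i j)"
  have L: "set L = {..<M} \<times> {..<M}" "distinct L" by (auto simp: L_def distinct_product)
  have carrier: "P p \<in> carrier_mat N N" for p by (simp add: P_def split: prod.split)
  have idem: "P p * P p = P p" if "p \<in> set L" for p
    using that L Pmat_idem[OF ph] by (auto simp: P_def)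
  have P_comm: "P q * P p = P p * P q" if "p \<in> set L" "q \<in> set L" for p q
    using that L comm by (auto simp: P_def)
  have X: "piH N H f \<in> carrier_mat N N" by (simp add: piH_def)
  show ?thesis
  proof (rule eq_zero_if_mult_joint_proj_eq_zero[OF L(2) carrier X])
    fix \<epsilon>
    let ?E = "joint_proj N P \<epsilon> L"
    have E: "?E \<in> carrier_mat N N" using carrier by (rule joint_proj_carrier)
    show "piH N H f * ?E = 0\<^sub>m N N"
    proof (cases "?E = 0\<^sub>m N N")
      case False
      have "\<And>x. x \<in> P_algebra M N H \<Longrightarrow> x \<in> carrier_mat N N \<and> (\<exists>c. x * ?E = c \<cdot>\<^sub>m ?E)"
        unfolding P_algebra_gen_alg_product L_def[symmetric] P_def[symmetric]
        using carrier idem P_comm by (rule gen_alg_acts_by_scalar_on_joint_proj)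
      then obtain \<chi> where ch: "character N (P_algebra M N H) \<chi>"
        and ev: "\<forall>x\<in>P_algebra M N H. x * ?E = \<chi> x \<cdot>\<^sub>m ?E"
        using character_of_eigenmatrix[OF E False] by blast
      obtain \<sigma> where \<sigma>: "\<sigma> \<in> char_pperms M N H"
        and \<chi>\<sigma>: "\<forall>i<M. \<forall>j<M. \<sigma> j = Some i \<longleftrightarrow> \<chi> (Pmat N H i j) = 1"
        using char_pperm_of_character[OF ph ch] by blast
      have "piH N H f * ?E = \<chi> (piH N H f) \<cdot>\<^sub>m ?E"
        using ev piH_in_P_algebra[OF f] by blast
      also have "\<chi> (piH N H f) = 0" using character_piH[OF ph ch \<chi>\<sigma> f] vanish \<sigma> by simp
      finally show ?thesis using E by (auto intro: eq_matI)
    qed (use X in simp)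
  qed
qed

lemma piH_eq_zero_iff:
  assumes ph: "partial_hadamard M N H"
    and "\<forall>i<M. \<forall>j<M. \<forall>k<M. \<forall>l<M. Pmat N H i j * Pmat N H k l = Pmat N H k l * Pmat N H i j"
    and f: "f \<in> free_alg M"
  shows "piH N H f = 0\<^sub>m N N \<longleftrightarrow> (\<forall>\<sigma>\<in>char_pperms M N H. lin_ext (ev_word \<sigma>) f = 0)"
proof
  assume "piH N H f = 0\<^sub>m N N"
  then show "\<forall>\<sigma>\<in>char_pperms M N H. lin_ext (ev_word \<sigma>) f = 0"
    using character_piH[OF ph _ _ f] character_zero[OF _ one_in_P_algebra]
    unfolding char_pperms_def by fastforce
qed (rule piH_eq_zero_if_vanishes_on_char_pperms[OF assms])

lemma factorization_ideal_vanishes_on_gen_semigroup: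
  assumes ph: "partial_hadamard M N H"
    and comm: "\<forall>i<M. \<forall>j<M. \<forall>k<M. \<forall>l<M. Pmat N H i j * Pmat N H k l = Pmat N H k l * Pmat N H i j"
    and I: "factorization_ideal M N H I"
    and "\<sigma> \<in> gen_semigroup (char_pperms M N H)" "f \<in> I"
  shows "lin_ext (ev_word \<sigma>) f = 0"
proof (rule lin_ext_vanishes_on_gen_semigroup[OF _ _ inj_pperm_char_pperms[OF ph] _ assms(4,5)])
  show "I \<subseteq> free_alg M"
    and "\<And>f. f \<in> I \<Longrightarrow> fcomul M f \<in> cspan ({ftensor a b | a b. a \<in> I \<and> b \<in> free_alg M} \<union>
       {ftensor a b | a b. a \<in> free_alg M \<and> b \<in> I})"
    using I unfolding factorization_ideal_def by blast+
  fix \<tau> g assume "\<tau> \<in> char_pperms M N H" "g \<in> I"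
  with I show "lin_ext (ev_word \<tau>) g = 0"
    using piH_eq_zero_iff[OF ph comm] unfolding factorization_ideal_def by blast
qed

theorem proposition2p3:
  fixes M N :: nat and H :: "nat \<Rightarrow> nat \<Rightarrow> complex"
  assumes "partial_hadamard M N H"
    and "\<forall>i<M. \<forall>j<M. \<forall>k<M. \<forall>l<M. Pmat N H i j * Pmat N H k l = Pmat N H k l * Pmat N H i j"
  shows "is_bialgebra_image M N H (gen_semigroup (char_pperms M N H))
         \<and> (\<forall>i<M. \<forall>j<M. qmap (gen_semigroup (char_pperms M N H)) (fgen i j)
               = (\<lambda>\<sigma>. if \<sigma> \<in> gen_semigroup (char_pperms M N H)
                        then (if \<sigma> j = Some i then 1 else 0) else 0))"
proof -
  let ?G = "gen_semigroup (char_pperms M N H)"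
  have inj: "inj_pperm M \<sigma>" if "\<sigma> \<in> ?G" for \<sigma>
    using inj_pperm_gen_semigroup[OF inj_pperm_char_pperms[OF assms(1)] that] .
  have fin: "finite ?G"
    using inj by (blast intro: finite_subset[OF _ finite_inj_pperm])
  have comul: "qqmap ?G (fcomul M f) \<sigma> \<tau> = qmap ?G f (\<sigma> \<circ>\<^sub>m \<tau>)"
    if "f \<in> free_alg M" "\<sigma> \<in> ?G" "\<tau> \<in> ?G" for f \<sigma> \<tau>
    using that inj[OF that(3)] gen_semigroup.comp[OF that(2,3)]
    by (simp add: qqmap_eq_lin_ext qmap_eq_lin_ext lin_ext_fcomul fin_supp_free_alg inj_pperm_def)
  have factors: "piH N H f = 0\<^sub>m N N" if "f \<in> free_alg M" "qmap ?G f = (\<lambda>_. 0)" for f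
    using that piH_eq_zero_iff[OF assms that(1)] gen_semigroup.base
    by (auto simp: qmap_eq_lin_ext fun_eq_iff split: if_splits)
  have minimal: "qmap ?G f = (\<lambda>_. 0)" if "factorization_ideal M N H I" "f \<in> I" for I f
    using factorization_ideal_vanishes_on_gen_semigroup[OF assms that(1) _ that(2)]
    by (simp add: qmap_eq_lin_ext fun_eq_iff)
  have relations: "qmap ?G r = (\<lambda>_. 0)" if "r \<in> submagic_rels M" for r
    using lin_ext_submagic_rel[OF inj that] by (simp add: qmap_eq_lin_ext fun_eq_iff)
  show ?thesis
    unfolding is_bialgebra_image_def
    using gen_semigroup.comp qmap_onto[OF fin inj] relations comul factors minimal
    by (simp add: qmap_fone qmap_fgen qmap_fadd qmap_fscale qmap_fmul qmap_fstar fin_supp_free_alg)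
qed

end
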